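(* Let $n\ge1$ and $P=2\lceil\log_2 n+\log_2\log_2 n\rceil+1$. Let $a_0\in[0,2]$, $a_1\in[0,P-1]$, and $\mathcal{C}'_{2,3,P}=\{\boldsymbol{z}\in\Sigma_2^n:\mathrm{VT}^{(0)}(\boldsymbol{z})\equiv a_0\pmod3,\ \mathrm{VT}^{(1)}(\boldsymbol{z})\equiv a_1\pmod P\}$. Then the code $$\mathcal{C}=\{\boldsymbol{x}\in\mathcal{ALL}(n,\tfrac{P-1}{2}):\ \mathbf{1}(\boldsymbol{x})\in\mathcal{C}'_{2,3,P}\}\subseteq\Sigma_2^n$$ is a $2$-read $(n,4)_2$-code. Moreover, there exists a choice of $a_0,a_1$ such that $r(\mathcal{C})\le\log_2\log_2n+\log_26+o(1)$ as $n\to\infty$.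
   Context: $\Sigma_2=\{0,1\}$. For $\boldsymbol{x}\in\Sigma_2^n$, $x[i]$ is its $i$-th entry, with $x[i]=0$ for $i\notin[1,n]$. $\mathrm{VT}^{(k)}(\boldsymbol{z})=\sum_{i=1}^n i^kz[i]$. The indicator sequence $\mathbf{1}(\boldsymbol{x})$ has entries $\mathbf{1}(\boldsymbol{x})[i]=x[i]+x[i-1]\bmod 2$, $i\in[1,n]$. A sequence is alternating if it has the form $abab\cdots$ with $a\ne b$; $\mathcal{ALL}(n,L)$ is the set of $\boldsymbol{x}\in\Sigma_2^n$ all of whose alternating substrings (contiguous blocks) have length at most $L$. $\mathcal{R}(\boldsymbol{x})$ is the length-$(n+1)$ vector whose $i$-th entry is the multiset $\{\{x[i-1],x[i]\}\}$; $\mathcal{C}$ is a $2$-read $(n,d)_2$-code if $d_H(\mathcal{R}(\boldsymbol{x}),\mathcal{R}(\boldsymbol{y}))\ge d$ for distinct $\boldsymbol{x},\boldsymbol{y}\in\mathcal{C}$. Redundancy: $r(\mathcal{C})=n-\log_2|\mathcal{C}|$. *)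

theory Defs
  imports Complex_Main "HOL-Library.Multiset"
begin

text \<open>Binary sequences of length n are modelled as functions nat => nat with
  values in {0,1}, 1-based indexing, and x i = 0 for i outside [1,n].\<close>

definition binseqs :: "nat \<Rightarrow> (nat \<Rightarrow> nat) set" where
  "binseqs n = {x. (\<forall>i. x i \<le> 1) \<and> (\<forall>i. (i = 0 \<or> n < i) \<longrightarrow> x i = 0)}"

definition VT :: "nat \<Rightarrow> nat \<Rightarrow> (nat \<Rightarrow> nat) \<Rightarrow> nat" where
  "VT k n z = (\<Sum>i=1..n. i ^ k * z i)"

definition indicator_seq :: "nat \<Rightarrow> (nat \<Rightarrow> nat) \<Rightarrow> (nat \<Rightarrow> nat)" where
  "indicator_seq n x = (\<lambda>i. if 1 \<le> i \<and> i \<le> n then (x i + x (i - 1)) mod 2 else 0)"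

definition alternating_block :: "(nat \<Rightarrow> nat) \<Rightarrow> nat \<Rightarrow> nat \<Rightarrow> bool" where
  "alternating_block x i j = (\<forall>k. i \<le> k \<and> k < j \<longrightarrow> x k \<noteq> x (Suc k))"

definition ALL_set :: "nat \<Rightarrow> nat \<Rightarrow> (nat \<Rightarrow> nat) set" where
  "ALL_set n L = {x \<in> binseqs n. \<forall>i j. 1 \<le> i \<and> i \<le> j \<and> j \<le> n \<and> alternating_block x i j
                                     \<longrightarrow> j - i + 1 \<le> L}"

definition read2 :: "(nat \<Rightarrow> nat) \<Rightarrow> nat \<Rightarrow> nat multiset" where
  "read2 x i = {# x (i - 1), x i #}"

definition read2_dist :: "nat \<Rightarrow> (nat \<Rightarrow> nat) \<Rightarrow> (nat \<Rightarrow> nat) \<Rightarrow> nat" where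
  "read2_dist n x y = card {i \<in> {1..n+1}. read2 x i \<noteq> read2 y i}"

definition two_read_code :: "nat \<Rightarrow> nat \<Rightarrow> (nat \<Rightarrow> nat) set \<Rightarrow> bool" where
  "two_read_code n d C \<longleftrightarrow> C \<subseteq> binseqs n \<and>
     (\<forall>x\<in>C. \<forall>y\<in>C. x \<noteq> y \<longrightarrow> d \<le> read2_dist n x y)"

definition redundancy :: "nat \<Rightarrow> (nat \<Rightarrow> nat) set \<Rightarrow> real" where
  "redundancy n C = real n - log 2 (real (card C))"

definition Pn :: "nat \<Rightarrow> nat" where
  "Pn n = nat (2 * \<lceil>log 2 (real n) + log 2 (log 2 (real n))\<rceil> + 1)"

definition Cprime :: "nat \<Rightarrow> nat \<Rightarrow> nat \<Rightarrow> (nat \<Rightarrow> nat) set" where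
  "Cprime n a0 a1 = {z \<in> binseqs n. VT 0 n z mod 3 = a0 \<and> VT 1 n z mod Pn n = a1}"

definition code :: "nat \<Rightarrow> nat \<Rightarrow> nat \<Rightarrow> (nat \<Rightarrow> nat) set" where
  "code n a0 a1 = {x \<in> ALL_set n ((Pn n - 1) div 2). indicator_seq n x \<in> Cprime n a0 a1}"

end

theory Submission
  imports Defs "HOL-Real_Asymp.Real_Asymp"
begin

text \<open>
  Call a position i a switch of x and y if x and y agree at exactly one of i - 1 and i.
  Switches are positions where both the 2-reads and the indicator sequences of x and y differ.
  If two distinct codewords x, y had fewer than four differing 2-reads, the set where they
  disagree would therefore be a single interval [p, m], and inside it x would alternate except
  at one step at most, since a non-alternating step of x where both words disagree is again a
  differing read. Membership in ALL(n, L) then gives m + 1 - p <= 2L < P. The indicator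
  sequences differ exactly at p and m + 1: the check of VT^0 modulo 3 forces the two errors to
  have opposite signs, and then the check of VT^1 makes P divide m + 1 - p, a contradiction.

  For the redundancy, at most (n - L) 2^(n - L) words contain an alternating block of length
  L + 1, a fraction of at most 1 / log n because n log n <= 2^L. The 3P choices of (a0, a1)
  cover the remaining words, so one of the codes has at least 2^n (1 - 1 / log n) / (3P) words.
\<close>

lemma binseqs_values: "x \<in> binseqs n \<Longrightarrow> x i = 0 \<or> x i = 1"
  unfolding binseqs_def by (metis (mono_tags, lifting) le_SucE le_zero_eq mem_Collect_eq One_nat_def)

lemma binseqs_outside: "x \<in> binseqs n \<Longrightarrow> i = 0 \<or> n < i \<Longrightarrow> x i = 0"
  unfolding binseqs_def by auto

lemma binseqs_support: "x \<in> binseqs n \<Longrightarrow> x i \<noteq> 0 \<Longrightarrow> i \<in> {1..n}"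
  unfolding binseqs_def by (cases "i = 0 \<or> n < i") auto

lemma indicator_seq_in_binseqs: "indicator_seq n x \<in> binseqs n"
  unfolding indicator_seq_def binseqs_def by auto

section \<open>Minimum 2-read distance\<close>

lemma read2_eq_iff:
  assumes "x \<in> binseqs n" "y \<in> binseqs n"
  shows "read2 x i = read2 y i \<longleftrightarrow> x (i - 1) + x i = y (i - 1) + y i"
  using binseqs_values[OF assms(1), of "i - 1"] binseqs_values[OF assms(1), of i]
        binseqs_values[OF assms(2), of "i - 1"] binseqs_values[OF assms(2), of i]
  unfolding read2_def by (elim disjE) (simp_all add: add_mset_commute add_eq_conv_diff)

lemma read2_neq_if_switch:
  assumes "x \<in> binseqs n" "y \<in> binseqs n" "(x (i - 1) = y (i - 1)) \<noteq> (x i = y i)"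
  shows "read2 x i \<noteq> read2 y i"
  using assms binseqs_values[OF assms(1), of "i - 1"] binseqs_values[OF assms(1), of i]
        binseqs_values[OF assms(2), of "i - 1"] binseqs_values[OF assms(2), of i]
  by (auto simp: read2_eq_iff)

lemma read2_eq_iff_alternating:
  assumes "x \<in> binseqs n" "y \<in> binseqs n" "x k \<noteq> y k" "x (Suc k) \<noteq> y (Suc k)"
  shows "read2 x (Suc k) = read2 y (Suc k) \<longleftrightarrow> x k \<noteq> x (Suc k)"
  using assms binseqs_values[OF assms(1), of k] binseqs_values[OF assms(1), of "Suc k"]
        binseqs_values[OF assms(2), of k] binseqs_values[OF assms(2), of "Suc k"]
  by (auto simp: read2_eq_iff)

lemma indicator_seq_neq_iff_switch:
  assumes "x \<in> binseqs n" "y \<in> binseqs n" "1 \<le> i" "i \<le> n"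
  shows "indicator_seq n x i \<noteq> indicator_seq n y i \<longleftrightarrow> (x (i - 1) = y (i - 1)) \<noteq> (x i = y i)"
  using assms binseqs_values[OF assms(1), of "i - 1"] binseqs_values[OF assms(1), of i]
        binseqs_values[OF assms(2), of "i - 1"] binseqs_values[OF assms(2), of i]
  unfolding indicator_seq_def by auto

lemma read2_dist_ge_4:
  assumes "1 \<le> a" "a < b" "b < c" "c < d" "d \<le> n + 1"
    and "\<And>i. i \<in> {a, b, c, d} \<Longrightarrow> read2 x i \<noteq> read2 y i"
  shows "4 \<le> read2_dist n x y"
proof -
  have "card {a, b, c, d} \<le> read2_dist n x y"
    unfolding read2_dist_def using assms by (intro card_mono) auto
  moreover have "card {a, b, c, d} = 4" using assms by auto
  ultimately show ?thesis by simp
qed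

lemma nat_set_gap:
  fixes U :: "nat set"
  assumes "p \<in> U" "m \<in> U" "p < i" "i < m" "i \<notin> U"
  obtains a b where "p < a" "a < b" "b \<le> m" "a - 1 \<in> U" "a \<notin> U" "b - 1 \<notin> U" "b \<in> U"
proof -
  define a where "a = (LEAST j. p < j \<and> j \<notin> U)"
  have a: "p < a" "a \<notin> U" "a \<le> i"
    using LeastI[of "\<lambda>j. p < j \<and> j \<notin> U" i] Least_le[of "\<lambda>j. p < j \<and> j \<notin> U" i] assms
    unfolding a_def by auto
  have "a - 1 \<in> U"
    using assms(1) not_less_Least[of "a - 1" "\<lambda>j. p < j \<and> j \<notin> U"] a
    unfolding a_def[symmetric] by (cases "a - 1 = p") auto
  define b where "b = (LEAST j. a < j \<and> j \<in> U)"
  have b: "a < b" "b \<in> U" "b \<le> m"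
    using LeastI[of "\<lambda>j. a < j \<and> j \<in> U" m] Least_le[of "\<lambda>j. a < j \<and> j \<in> U" m] a assms
    unfolding b_def by auto
  have "b - 1 \<notin> U"
    using not_less_Least[of "b - 1" "\<lambda>j. a < j \<and> j \<in> U"] a b
    unfolding b_def[symmetric] by (cases "b - 1 = a") auto
  show thesis using that a b \<open>a - 1 \<in> U\<close> \<open>b - 1 \<notin> U\<close> by blast
qed

lemma read2_dist_lt_4_differ_on_interval:
  assumes x: "x \<in> binseqs n" and y: "y \<in> binseqs n" and "x \<noteq> y"
    and close: "read2_dist n x y < 4"
  obtains p m where "1 \<le> p" "p \<le> m" "m \<le> n" "{i. x i \<noteq> y i} = {p..m}"
proof -
  define U where "U = {i. x i \<noteq> y i}"
  have U_sub: "U \<subseteq> {1..n}"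
  proof
    fix i assume "i \<in> U"
    then have "x i \<noteq> 0 \<or> y i \<noteq> 0" unfolding U_def by auto
    then show "i \<in> {1..n}" using binseqs_support[OF x] binseqs_support[OF y] by blast
  qed
  then have "finite U" by (rule finite_subset) simp
  moreover have "U \<noteq> {}" using \<open>x \<noteq> y\<close> unfolding U_def by auto
  ultimately have p: "Min U \<in> U" and m: "Max U \<in> U"
    and bounds: "\<And>i. i \<in> U \<Longrightarrow> Min U \<le> i \<and> i \<le> Max U" by auto
  have switch: "read2 x i \<noteq> read2 y i" if "(i - 1 \<in> U) \<noteq> (i \<in> U)" for i
    using read2_neq_if_switch[OF x y] that unfolding U_def by auto
  have "U = {Min U..Max U}"
  proof (rule ccontr)
    assume "U \<noteq> {Min U..Max U}"
    moreover have "U \<subseteq> {Min U..Max U}" using bounds by auto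
    ultimately obtain i where "i \<in> {Min U..Max U}" "i \<notin> U" by blast
    then have "Min U < i" "i < Max U" "i \<notin> U"
      using p m by (auto simp: order.order_iff_strict)
    then obtain a b where ab: "Min U < a" "a < b" "b \<le> Max U"
      "a - 1 \<in> U" "a \<notin> U" "b - 1 \<notin> U" "b \<in> U"
      using nat_set_gap[OF p m] by blast
    have "Min U - 1 \<notin> U" "Max U + 1 \<notin> U"
      using bounds[of "Min U - 1"] bounds[of "Max U + 1"] p U_sub by fastforce+
    have "4 \<le> read2_dist n x y"
    proof (rule read2_dist_ge_4[of "Min U" a b "Max U + 1"])
      fix i assume "i \<in> {Min U, a, b, Max U + 1}"
      then have "(i - 1 \<in> U) \<noteq> (i \<in> U)"
        using \<open>Min U - 1 \<notin> U\<close> \<open>Max U + 1 \<notin> U\<close> ab p m by auto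
      then show "read2 x i \<noteq> read2 y i" by (rule switch)
    qed (use ab p m U_sub in auto)
    then show False using close by simp
  qed
  moreover have "1 \<le> Min U" "Max U \<le> n" using p m U_sub by auto
  ultimately show thesis using that[of "Min U" "Max U"] bounds p unfolding U_def by blast
qed

lemma read2_dist_lt_4_almost_alternating:
  assumes x: "x \<in> binseqs n" and y: "y \<in> binseqs n" and close: "read2_dist n x y < 4"
    and "1 \<le> p" "p \<le> m" "m \<le> n" and differ: "{i. x i \<noteq> y i} = {p..m}"
  obtains q where "\<And>k. p \<le> k \<Longrightarrow> k < m \<Longrightarrow> k \<noteq> q \<Longrightarrow> x k \<noteq> x (Suc k)"
proof -
  have differ_iff: "x i \<noteq> y i \<longleftrightarrow> p \<le> i \<and> i \<le> m" for i
    using differ by (simp add: set_eq_iff)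
  have ends: "read2 x p \<noteq> read2 y p" "read2 x (m + 1) \<noteq> read2 y (m + 1)"
    using differ_iff[of p] differ_iff[of "p - 1"] differ_iff[of m] differ_iff[of "m + 1"]
      \<open>1 \<le> p\<close> \<open>p \<le> m\<close>
    by (auto intro!: read2_neq_if_switch[OF x y])
  have inner: "read2 x (Suc k) \<noteq> read2 y (Suc k)" if "p \<le> k" "k < m" "x k = x (Suc k)" for k
    using read2_eq_iff_alternating[OF x y, of k] that differ_iff[of k] differ_iff[of "Suc k"]
    by simp
  have two_steps: False
    if "p \<le> k" "k < k'" "k' < m" "x k = x (Suc k)" "x k' = x (Suc k')" for k k'
  proof -
    have "4 \<le> read2_dist n x y"
    proof (rule read2_dist_ge_4[of p "Suc k" "Suc k'" "m + 1"])
      have "read2 x (Suc k) \<noteq> read2 y (Suc k)" "read2 x (Suc k') \<noteq> read2 y (Suc k')"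
        using inner that by simp_all
      moreover fix i assume "i \<in> {p, Suc k, Suc k', m + 1}"
      ultimately show "read2 x i \<noteq> read2 y i" using ends by blast
    qed (use that \<open>1 \<le> p\<close> \<open>m \<le> n\<close> in auto)
    then show False using close by simp
  qed
  show thesis
  proof (cases "\<exists>q. p \<le> q \<and> q < m \<and> x q = x (Suc q)")
    case True
    then obtain q where q: "p \<le> q" "q < m" "x q = x (Suc q)" by blast
    show thesis
    proof (rule that[of q])
      fix k assume k: "p \<le> k" "k < m" "k \<noteq> q"
      show "x k \<noteq> x (Suc k)"
      proof
        assume "x k = x (Suc k)"
        then show False
          using two_steps[of k q] two_steps[of q k] q k by (cases "k < q") simp_all
      qed
    qed
  next
    case False
    then show thesis using that by blast
  qed
qed

lemma ALL_set_almost_alternating_length: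
  assumes x: "x \<in> ALL_set n L" and "1 \<le> p" "p \<le> m" "m \<le> n"
    and alt: "\<And>k. p \<le> k \<Longrightarrow> k < m \<Longrightarrow> k \<noteq> q \<Longrightarrow> x k \<noteq> x (Suc k)"
  shows "m + 1 - p \<le> 2 * L"
proof -
  have block: "j - i + 1 \<le> L" if "1 \<le> i" "i \<le> j" "j \<le> n" "alternating_block x i j" for i j
    using x that unfolding ALL_set_def by blast
  show ?thesis
  proof (cases "p \<le> q \<and> q < m")
    case True
    have "alternating_block x p q" "alternating_block x (Suc q) m"
      using alt True unfolding alternating_block_def by auto
    then have "q - p + 1 \<le> L" "m - Suc q + 1 \<le> L"
      using block True \<open>1 \<le> p\<close> \<open>m \<le> n\<close> by auto
    then show ?thesis using True by linarith
  next
    case False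
    then have "alternating_block x p m"
      using alt unfolding alternating_block_def by auto
    then have "m - p + 1 \<le> L" using block \<open>1 \<le> p\<close> \<open>p \<le> m\<close> \<open>m \<le> n\<close> by blast
    then show ?thesis by linarith
  qed
qed

lemma indicator_seq_differ_at_ends:
  assumes x: "x \<in> binseqs n" and y: "y \<in> binseqs n"
    and "1 \<le> p" "p \<le> m" "m \<le> n" and differ: "{i. x i \<noteq> y i} = {p..m}"
  shows "indicator_seq n x p \<noteq> indicator_seq n y p"
    and "\<And>i. i \<noteq> p \<Longrightarrow> i \<noteq> m + 1 \<Longrightarrow> indicator_seq n x i = indicator_seq n y i"
proof -
  have differ_iff: "x i \<noteq> y i \<longleftrightarrow> p \<le> i \<and> i \<le> m" for i
    using differ by (simp add: set_eq_iff)
  show "indicator_seq n x p \<noteq> indicator_seq n y p"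
    using indicator_seq_neq_iff_switch[OF x y, of p] differ_iff[of p] differ_iff[of "p - 1"]
      \<open>1 \<le> p\<close> \<open>p \<le> m\<close> \<open>m \<le> n\<close> by auto
  fix i assume "i \<noteq> p" "i \<noteq> m + 1"
  show "indicator_seq n x i = indicator_seq n y i"
  proof (cases "1 \<le> i \<and> i \<le> n")
    case True
    have "(x (i - 1) = y (i - 1)) = (x i = y i)"
      using differ_iff[of i] differ_iff[of "i - 1"] \<open>i \<noteq> p\<close> \<open>i \<noteq> m + 1\<close> True by auto
    then show ?thesis using indicator_seq_neq_iff_switch[OF x y] True by blast
  next
    case False
    then show ?thesis unfolding indicator_seq_def by auto
  qed
qed

lemma VT_diff_supported:
  assumes z: "z \<in> binseqs n" and w: "w \<in> binseqs n" and "finite S"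
    and supp: "\<And>i. i \<notin> S \<Longrightarrow> z i = w i"
  shows "int (VT k n z) - int (VT k n w) = (\<Sum>i\<in>S. int (i ^ k) * (int (z i) - int (w i)))"
proof -
  define f where "f i = int (i ^ k) * (int (z i) - int (w i))" for i
  have outside: "f i = 0" if "i \<notin> {1..n}" for i
    using binseqs_outside[OF z, of i] binseqs_outside[OF w, of i] that unfolding f_def by auto
  have "int (VT k n z) - int (VT k n w) = sum f {1..n}"
    unfolding VT_def f_def by (simp add: sum_subtractf algebra_simps)
  also have "\<dots> = sum f ({1..n} \<union> S)"
    by (rule sum.mono_neutral_left) (use \<open>finite S\<close> outside in auto)
  also have "\<dots> = sum f S"
    by (rule sum.mono_neutral_right) (use \<open>finite S\<close> supp in \<open>auto simp: f_def\<close>)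
  finally show ?thesis unfolding f_def .
qed

lemma VT_congruent_two_differences_dvd:
  assumes z: "z \<in> binseqs n" and w: "w \<in> binseqs n"
    and VT0: "VT 0 n z mod 3 = VT 0 n w mod 3" and VT1: "VT 1 n z mod P = VT 1 n w mod P"
    and "p < q" and "z p \<noteq> w p" and supp: "\<And>i. i \<noteq> p \<Longrightarrow> i \<noteq> q \<Longrightarrow> z i = w i"
  shows "P dvd q - p"
proof -
  define e where "e i = int (z i) - int (w i)" for i
  have e_values: "e i \<in> {-1, 0, 1}" for i
    using binseqs_values[OF z, of i] binseqs_values[OF w, of i] unfolding e_def by auto
  have ep: "e p = 1 \<or> e p = -1"
    using binseqs_values[OF z, of p] binseqs_values[OF w, of p] \<open>z p \<noteq> w p\<close>
    unfolding e_def by auto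
  have diff: "int (VT k n z) - int (VT k n w) = int (p ^ k) * e p + int (q ^ k) * e q" for k
    using VT_diff_supported[OF z w, of "{p, q}" k] supp \<open>p < q\<close> unfolding e_def by auto
  have "(3::int) dvd int (VT 0 n z) - int (VT 0 n w)"
    using VT0 by (metis mod_eq_dvd_iff of_nat_mod of_nat_numeral)
  then have "(3::int) dvd e p + e q" using diff[of 0] by simp
  then have eq: "e q = - e p" using ep e_values[of q] by auto
  have "int P dvd int (VT 1 n z) - int (VT 1 n w)"
    using VT1 by (metis mod_eq_dvd_iff of_nat_mod)
  moreover have "int (VT 1 n z) - int (VT 1 n w) = - (e p * (int q - int p))"
    using diff[of 1] eq by (simp add: algebra_simps)
  ultimately have "int P dvd e p * (int q - int p)" by simp
  then have "int P dvd int q - int p"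
    using ep by (metis dvd_minus_iff mult_1 mult_minus1)
  then show ?thesis using \<open>p < q\<close> by (simp add: of_nat_diff[symmetric] del: of_nat_diff)
qed

lemma code_read2_dist_ge_4:
  assumes x: "x \<in> code n a0 a1" and y: "y \<in> code n a0 a1" and "x \<noteq> y"
  shows "4 \<le> read2_dist n x y"
proof (rule ccontr)
  assume close: "\<not> 4 \<le> read2_dist n x y"
  define L where "L = (Pn n - 1) div 2"
  have xL: "x \<in> ALL_set n L" and yL: "y \<in> ALL_set n L"
    using x y unfolding code_def L_def by auto
  then have xb: "x \<in> binseqs n" and yb: "y \<in> binseqs n" unfolding ALL_set_def by auto
  obtain p m where pm: "1 \<le> p" "p \<le> m" "m \<le> n" and differ: "{i. x i \<noteq> y i} = {p..m}"
    using read2_dist_lt_4_differ_on_interval[OF xb yb \<open>x \<noteq> y\<close>] close by auto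
  obtain q where "\<And>k. p \<le> k \<Longrightarrow> k < m \<Longrightarrow> k \<noteq> q \<Longrightarrow> x k \<noteq> x (Suc k)"
    using read2_dist_lt_4_almost_alternating[OF xb yb _ pm differ] close by auto
  then have short: "m + 1 - p \<le> 2 * L"
    using ALL_set_almost_alternating_length[OF xL pm] by blast
  have "indicator_seq n x \<in> Cprime n a0 a1" "indicator_seq n y \<in> Cprime n a0 a1"
    using x y unfolding code_def by auto
  then have "Pn n dvd m + 1 - p"
    using indicator_seq_differ_at_ends[OF xb yb pm differ] \<open>p \<le> m\<close>
      VT_congruent_two_differences_dvd[OF indicator_seq_in_binseqs indicator_seq_in_binseqs,
        of n x y "Pn n" p "m + 1"]
    unfolding Cprime_def by auto
  then have "Pn n \<le> m + 1 - p" using \<open>p \<le> m\<close> by (intro dvd_imp_le) auto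
  then show False using short \<open>p \<le> m\<close> unfolding L_def by linarith
qed

lemma two_read_code_code: "two_read_code n 4 (code n a0 a1)"
  unfolding two_read_code_def using code_read2_dist_ge_4 by (auto simp: code_def ALL_set_def)

section \<open>Redundancy\<close>

lemma binseqs_eq_image_Pow: "binseqs n = (\<lambda>S i. of_bool (i \<in> S)) ` Pow {1..n}"
proof
  show "(\<lambda>S i. of_bool (i \<in> S)) ` Pow {1..n} \<subseteq> binseqs n" unfolding binseqs_def by auto
next
  show "binseqs n \<subseteq> (\<lambda>S i. of_bool (i \<in> S)) ` Pow {1..n}"
  proof
    fix x assume x: "x \<in> binseqs n"
    have "x = (\<lambda>i. of_bool (i \<in> {i \<in> {1..n}. x i = 1}))"
    proof
      fix i show "x i = of_bool (i \<in> {i \<in> {1..n}. x i = 1})"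
        using binseqs_values[OF x, of i] binseqs_support[OF x, of i] by auto
    qed
    then show "x \<in> (\<lambda>S i. of_bool (i \<in> S)) ` Pow {1..n}" by blast
  qed
qed

lemma finite_binseqs: "finite (binseqs n)"
  by (simp add: binseqs_eq_image_Pow)

lemma card_binseqs: "card (binseqs n) = 2 ^ n"
proof -
  have "inj_on (\<lambda>S i. of_bool (i \<in> S) :: nat) (Pow {1..n})"
    by (rule inj_onI) (metis of_bool_eq_iff subsetI subset_antisym)
  then show ?thesis by (simp add: binseqs_eq_image_Pow card_image card_Pow)
qed

lemma alternating_block_values:
  assumes "x \<in> binseqs n" "alternating_block x i j" "t \<le> j - i"
  shows "x (i + t) = (x i + t) mod 2"
  using assms(3)
proof (induction t)
  case 0
  then show ?case using binseqs_values[OF assms(1), of i] by auto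
next
  case (Suc t)
  then have "x (i + t) \<noteq> x (Suc (i + t))" "x (i + t) = (x i + t) mod 2"
    using assms(2) unfolding alternating_block_def by auto
  then show ?case
    using binseqs_values[OF assms(1), of "i + Suc t"] binseqs_values[OF assms(1), of "i + t"]
    by (auto simp: mod_Suc)
qed

lemma card_alternating_block_le:
  assumes "i + L \<le> n"
  shows "card {x \<in> binseqs n. alternating_block x i (i + L)} \<le> 2 ^ (n - L)"
proof -
  define B where "B = {x \<in> binseqs n. alternating_block x i (i + L)}"
  define squeeze where "squeeze x j = (if j \<le> i then x j else x (j + L))" for x :: "nat \<Rightarrow> nat" and j
  have "squeeze ` B \<subseteq> binseqs (n - L)"
  proof
    fix y assume "y \<in> squeeze ` B"
    then obtain x where x: "x \<in> binseqs n" and y: "y = squeeze x" unfolding B_def by blast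
    show "y \<in> binseqs (n - L)"
      unfolding binseqs_def
    proof (intro CollectI conjI allI impI)
      fix j
      show "y j \<le> 1" using x unfolding y squeeze_def binseqs_def by simp
      assume "j = 0 \<or> n - L < j"
      then show "y j = 0"
        using assms binseqs_outside[OF x, of j] binseqs_outside[OF x, of "j + L"]
        unfolding y squeeze_def by auto
    qed
  qed
  moreover have "inj_on squeeze B"
  proof (rule inj_onI)
    fix x y assume "x \<in> B" "y \<in> B" and eq: "squeeze x = squeeze y"
    then have x: "x \<in> binseqs n" "alternating_block x i (i + L)"
      and y: "y \<in> binseqs n" "alternating_block y i (i + L)" unfolding B_def by auto
    have same: "squeeze x j = squeeze y j" for j using eq by simp
    show "x = y"
    proof
      fix k
      consider "k \<le> i" | "i < k" "k \<le> i + L" | "i + L < k" by linarith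
      then show "x k = y k"
      proof cases
        case 1
        then show ?thesis using same[of k] unfolding squeeze_def by simp
      next
        case 2
        then have "x (i + (k - i)) = y (i + (k - i))"
          using alternating_block_values[OF x, of "k - i"] alternating_block_values[OF y, of "k - i"]
            same[of i] unfolding squeeze_def by simp
        then show ?thesis using 2 by simp
      next
        case 3
        then have "\<not> k - L \<le> i" "k - L + L = k" by auto
        then show ?thesis using same[of "k - L"] unfolding squeeze_def by simp
      qed
    qed
  qed
  ultimately have "card B \<le> card (binseqs (n - L))"
    by (intro card_inj_on_le finite_binseqs)
  then show ?thesis unfolding B_def card_binseqs .
qed

lemma card_ALL_set_ge: "2 ^ n \<le> card (ALL_set n L) + (n - L) * 2 ^ (n - L)"
proof -
  have sub: "ALL_set n L \<subseteq> binseqs n" unfolding ALL_set_def by auto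
  have "binseqs n - ALL_set n L \<subseteq> (\<Union>i\<in>{1..n - L}. {x \<in> binseqs n. alternating_block x i (i + L)})"
  proof
    fix x assume x: "x \<in> binseqs n - ALL_set n L"
    then obtain i j where "1 \<le> i" "i \<le> j" "j \<le> n" "alternating_block x i j" "L < j - i + 1"
      unfolding ALL_set_def by auto
    then have "i \<in> {1..n - L}" "alternating_block x i (i + L)"
      unfolding alternating_block_def by auto
    then show "x \<in> (\<Union>i\<in>{1..n - L}. {x \<in> binseqs n. alternating_block x i (i + L)})"
      using x by blast
  qed
  then have "card (binseqs n - ALL_set n L)
      \<le> card (\<Union>i\<in>{1..n - L}. {x \<in> binseqs n. alternating_block x i (i + L)})"
    by (rule card_mono[rotated]) (simp add: finite_binseqs)
  also have "\<dots> \<le> (\<Sum>i\<in>{1..n - L}. card {x \<in> binseqs n. alternating_block x i (i + L)})"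
    by (rule card_UN_le) simp
  also have "\<dots> \<le> (\<Sum>i\<in>{1..n - L}. 2 ^ (n - L))"
    by (rule sum_mono) (rule card_alternating_block_le, auto)
  finally have "card (binseqs n - ALL_set n L) \<le> (n - L) * 2 ^ (n - L)" by simp
  moreover have "card (binseqs n) = card (ALL_set n L) + card (binseqs n - ALL_set n L)"
    using sub finite_binseqs by (metis card_Diff_subset card_mono finite_subset le_add_diff_inverse)
  ultimately show ?thesis unfolding card_binseqs by linarith
qed

lemma card_ALL_set_ge_real: "2 ^ n * (1 - real n / 2 ^ L) \<le> real (card (ALL_set n L))"
proof -
  have "real (n - L) * 2 ^ (n - L) \<le> real n * 2 ^ n / 2 ^ L"
  proof (cases "L \<le> n")
    case True
    then have "(2::real) ^ (n - L) = 2 ^ n / 2 ^ L" by (simp add: power_diff)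
    then show ?thesis by (simp add: divide_right_mono mult_right_mono)
  qed simp
  moreover have "(2::real) ^ n \<le> real (card (ALL_set n L)) + real (n - L) * 2 ^ (n - L)"
    using of_nat_mono[OF card_ALL_set_ge[of n L], where 'a = real] by simp
  ultimately show ?thesis by (simp add: algebra_simps)
qed

lemma card_UN_le_card_mult:
  assumes "finite I" "I \<noteq> {}"
  obtains i where "i \<in> I" "card (\<Union>i\<in>I. A i) \<le> card I * card (A i)"
proof -
  have "Max ((\<lambda>j. card (A j)) ` I) \<in> (\<lambda>j. card (A j)) ` I"
    using assms by (intro Max_in) auto
  then obtain i where "i \<in> I" "card (A i) = Max ((\<lambda>j. card (A j)) ` I)" by auto
  then have i: "i \<in> I" "\<And>j. j \<in> I \<Longrightarrow> card (A j) \<le> card (A i)"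
    using assms(1) by auto
  have "card (\<Union>i\<in>I. A i) \<le> (\<Sum>j\<in>I. card (A j))" by (rule card_UN_le[OF assms(1)])
  also have "\<dots> \<le> card I * card (A i)"
    using sum_bounded_above[of I "\<lambda>j. card (A j)" "card (A i)"] i(2) by simp
  finally show thesis using that i(1) by blast
qed

lemma ALL_set_subset_UN_code:
  assumes "0 < Pn n"
  shows "ALL_set n ((Pn n - 1) div 2) \<subseteq> (\<Union>a\<in>{0..2::nat} \<times> {0..<Pn n}. code n (fst a) (snd a))"
proof
  fix x assume x: "x \<in> ALL_set n ((Pn n - 1) div 2)"
  define z where "z = indicator_seq n x"
  have "x \<in> code n (VT 0 n z mod 3) (VT 1 n z mod Pn n)"
    using x indicator_seq_in_binseqs unfolding code_def Cprime_def z_def by auto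
  moreover have "(VT 0 n z mod 3, VT 1 n z mod Pn n) \<in> {0..2::nat} \<times> {0..<Pn n}" using assms by auto
  ultimately show "x \<in> (\<Union>a\<in>{0..2::nat} \<times> {0..<Pn n}. code n (fst a) (snd a))" by force
qed

lemma exists_large_code:
  assumes "0 < Pn n"
  obtains a0 a1 where "a0 \<le> 2" "a1 \<le> Pn n - 1"
    "card (ALL_set n ((Pn n - 1) div 2)) \<le> 3 * Pn n * card (code n a0 a1)"
proof -
  let ?I = "{0..2::nat} \<times> {0..<Pn n}"
  have "finite (\<Union>a\<in>?I. code n (fst a) (snd a))"
    by (rule finite_subset[OF _ finite_binseqs]) (auto simp: code_def ALL_set_def)
  then have "card (ALL_set n ((Pn n - 1) div 2)) \<le> card (\<Union>a\<in>?I. code n (fst a) (snd a))"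
    using ALL_set_subset_UN_code[OF assms] by (rule card_mono)
  moreover obtain a where "a \<in> ?I"
    "card (\<Union>a\<in>?I. code n (fst a) (snd a)) \<le> card ?I * card (code n (fst a) (snd a))"
    using card_UN_le_card_mult[of ?I "\<lambda>a. code n (fst a) (snd a)"] assms by auto
  moreover have "card ?I = 3 * Pn n" by simp
  ultimately show thesis using that[of "fst a" "snd a"] by (auto simp: mem_Times_iff)
qed

lemma redundancy_le:
  assumes "0 < c" "c \<le> real (card C)"
  shows "redundancy n C \<le> real n - log 2 c"
  using assms unfolding redundancy_def by simp

lemma log2_bounds:
  assumes "2 \<le> n"
  shows "1 \<le> log 2 (real n)" and "0 \<le> log 2 (log 2 (real n))"
  using assms by simp_all

lemma Pn_eq:
  assumes "2 \<le> n"
  shows "Pn n = 2 * nat \<lceil>log 2 n + log 2 (log 2 n)\<rceil> + 1"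
proof -
  have "0 \<le> log 2 n + log 2 (log 2 n)" using log2_bounds[OF assms] by linarith
  then have "0 \<le> \<lceil>log 2 n + log 2 (log 2 n)\<rceil>" by simp
  then show ?thesis unfolding Pn_def by (simp add: nat_add_distrib nat_mult_distrib)
qed

lemma Pn_le:
  assumes "2 \<le> n"
  shows "real (Pn n) \<le> 2 * (log 2 n + log 2 (log 2 n)) + 3"
proof -
  have "0 \<le> log 2 n + log 2 (log 2 n)" using log2_bounds[OF assms] by linarith
  then have "0 \<le> \<lceil>log 2 n + log 2 (log 2 n)\<rceil>" by simp
  then have "real (Pn n) = 2 * real_of_int \<lceil>log 2 n + log 2 (log 2 n)\<rceil> + 1"
    unfolding Pn_eq[OF assms] by simp
  then show ?thesis
    using of_int_ceiling_le_add_one[of "log 2 n + log 2 (log 2 n)"] by argo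
qed

lemma n_log_le_two_pow_half_Pn:
  assumes "2 \<le> n"
  shows "real n * log 2 n \<le> 2 ^ ((Pn n - 1) div 2)"
proof -
  define c where "c = \<lceil>log 2 n + log 2 (log 2 n)\<rceil>"
  have "0 \<le> log 2 n + log 2 (log 2 n)" using log2_bounds[OF assms] by linarith
  then have "0 \<le> c" unfolding c_def by simp
  have "real n * log 2 n = 2 powr (log 2 n + log 2 (log 2 n))"
    using log2_bounds[OF assms] assms by (simp add: powr_add)
  also have "\<dots> \<le> 2 powr real (nat c)"
    using \<open>0 \<le> c\<close> unfolding c_def by (intro powr_mono) auto
  also have "\<dots> = 2 ^ ((Pn n - 1) div 2)"
    unfolding Pn_eq[OF assms] c_def[symmetric] by (simp add: powr_realpow)
  finally show ?thesis .
qed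

lemma card_code_ge:
  assumes "3 \<le> n"
  obtains a0 a1 where "a0 \<le> 2" "a1 \<le> Pn n - 1"
    "2 ^ n * (1 - 1 / log 2 n) \<le> 3 * real (Pn n) * real (card (code n a0 a1))"
proof -
  define L where "L = (Pn n - 1) div 2"
  have "0 < Pn n" using Pn_eq assms by simp
  then obtain a0 a1 where a: "a0 \<le> 2" "a1 \<le> Pn n - 1"
    and pigeon: "card (ALL_set n L) \<le> 3 * Pn n * card (code n a0 a1)"
    unfolding L_def by (rule exists_large_code)
  have "real n / 2 ^ L \<le> 1 / log 2 n"
    using n_log_le_two_pow_half_Pn[of n] log2_bounds(1)[of n] assms unfolding L_def
    by (simp add: field_simps)
  then have "2 ^ n * (1 - 1 / log 2 n) \<le> 2 ^ n * (1 - real n / 2 ^ L)"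
    by (intro mult_left_mono) auto
  also have "\<dots> \<le> real (card (ALL_set n L))" by (rule card_ALL_set_ge_real)
  also have "\<dots> \<le> 3 * real (Pn n) * real (card (code n a0 a1))"
    using pigeon by (metis of_nat_le_iff of_nat_mult of_nat_numeral)
  finally show thesis by (rule that[OF a])
qed

lemma log_three_Pn_le:
  assumes "2 \<le> n"
  shows "log 2 (3 * real (Pn n))
    \<le> log 2 6 + log 2 (log 2 n) + log 2 (1 + (log 2 (log 2 n) + 3/2) / log 2 n)"
proof -
  define l where "l = log 2 (real n)"
  have "1 \<le> l" "0 \<le> log 2 l" using log2_bounds[OF assms] unfolding l_def by simp_all
  have "3 * real (Pn n) \<le> 6 * (l + log 2 l) + 9"
    using Pn_le[OF assms] unfolding l_def by simp
  also have "\<dots> = 6 * (l * (1 + (log 2 l + 3/2) / l))"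
    using \<open>1 \<le> l\<close> by (simp add: field_simps)
  finally have "log 2 (3 * real (Pn n)) \<le> log 2 (6 * (l * (1 + (log 2 l + 3/2) / l)))"
    using Pn_eq[OF assms] by simp
  also have "\<dots> = log 2 6 + log 2 l + log 2 (1 + (log 2 l + 3/2) / l)"
    using \<open>1 \<le> l\<close> \<open>0 \<le> log 2 l\<close> by (simp add: log_mult_pos add_pos_nonneg)
  finally show ?thesis unfolding l_def .
qed

definition redundancy_slack :: "nat \<Rightarrow> real" where
  "redundancy_slack n = log 2 (1 + (log 2 (log 2 n) + 3/2) / log 2 n) - log 2 (1 - 1 / log 2 n)"

lemma redundancy_slack_tendsto_0: "redundancy_slack \<longlonglongrightarrow> 0"
  unfolding redundancy_slack_def by real_asymp

lemma redundancy_code_le: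
  assumes "3 \<le> n"
  obtains a0 a1 where "a0 \<le> 2" "a1 \<le> Pn n - 1"
    "redundancy n (code n a0 a1) \<le> log 2 (log 2 n) + log 2 6 + redundancy_slack n"
proof -
  define l where "l = log 2 (real n)"
  define Q where "Q = 3 * real (Pn n)"
  have "1 < l" unfolding l_def using assms by (simp add: less_log_iff)
  have "0 < Pn n" using Pn_eq[of n] assms by simp
  then have "0 < Q" unfolding Q_def by simp
  obtain a0 a1 where a: "a0 \<le> 2" "a1 \<le> Pn n - 1"
    and "2 ^ n * (1 - 1 / l) \<le> Q * real (card (code n a0 a1))"
    using card_code_ge[OF assms] unfolding l_def Q_def by blast
  then have "2 ^ n * (1 - 1 / l) / Q \<le> real (card (code n a0 a1))"
    using \<open>0 < Q\<close> by (simp add: field_simps)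
  then have "redundancy n (code n a0 a1) \<le> real n - log 2 (2 ^ n * (1 - 1 / l) / Q)"
    using \<open>1 < l\<close> \<open>0 < Q\<close> by (intro redundancy_le) auto
  also have "\<dots> = log 2 Q - log 2 (1 - 1 / l)"
    using \<open>1 < l\<close> \<open>0 < Q\<close> by (simp add: log_divide_pos log_mult_pos)
  finally have "redundancy n (code n a0 a1) \<le> log 2 Q - log 2 (1 - 1 / l)" .
  with log_three_Pn_le[of n] assms show thesis
    unfolding l_def Q_def by (intro that[OF a]) (simp add: redundancy_slack_def)
qed

theorem theorem10:
  shows "(\<forall>n a0 a1. 1 \<le> n \<and> a0 \<le> 2 \<and> a1 \<le> Pn n - 1 \<longrightarrow> two_read_code n 4 (code n a0 a1))
       \<and> (\<exists>\<epsilon> :: nat \<Rightarrow> real. \<epsilon> \<longlonglongrightarrow> 0 \<and>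
            (\<forall>\<^sub>F n in sequentially. \<exists>a0 a1. a0 \<le> 2 \<and> a1 \<le> Pn n - 1 \<and>
               redundancy n (code n a0 a1) \<le> log 2 (log 2 (real n)) + log 2 6 + \<epsilon> n))"
proof (intro conjI allI impI exI[of _ redundancy_slack])
  show "two_read_code n 4 (code n a0 a1)" for n a0 a1 by (rule two_read_code_code)
  show "redundancy_slack \<longlonglongrightarrow> 0" by (rule redundancy_slack_tendsto_0)
  show "\<forall>\<^sub>F n in sequentially. \<exists>a0 a1. a0 \<le> 2 \<and> a1 \<le> Pn n - 1 \<and>
      redundancy n (code n a0 a1) \<le> log 2 (log 2 (real n)) + log 2 6 + redundancy_slack n"
    using eventually_ge_at_top[of 3] by eventually_elim (blast elim: redundancy_code_le)
qed

end
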